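(* Consider single-input single-output discrete-time state-space models (SSMs) $$x_{k+1}=\mathbf{A}x_k+\mathbf{B}u_k,\qquad y_k=\mathbf{C}x_k+\mathbf{D}u_k,\qquad x_0=0,$$ whose state matrix $\mathbf{A}\in\mathbb{R}^{d\times d}$ is a companion matrix. Such companion SSMs can represent each of the following. (i) (ARIMA) Let $p,q,r\ge 0$ be integers and $\phi_1,\dots,\phi_p,\theta_1,\dots,\theta_q\in\mathbb{R}$. Let $L$ denote the lag operator, $(Lz)_k=z_{k-1}$, and consider the ARIMA$(p,r,q)$ relation $$\Big(1-\sum_{i=1}^p\phi_iL^i\Big)(1-L)^r y_k=\Big(1+\sum_{j=1}^q\theta_jL^j\Big)u_k,$$ which, with zero initial conditions ($u_k=y_k=0$ for $k<0$), determines the output sequence $(y_k)_{k\ge0}$ causally from the input sequence $(u_k)_{k\ge0}$. Then there exist $d\ge 1$, a companion matrix $\mathbf{A}\in\mathbb{R}^{d\times d}$, and $\mathbf{B}\in\mathbb{R}^{d\times1}$, $\mathbf{C}\in\mathbb{R}^{1\times d}$, $\mathbf{D}\in\mathbb{R}$ such that, for every input sequence $(u_k)_{k\ge0}$, the SSM output equals $(y_k)_{k\ge0}$. (ii) (Simple exponential smoothing) Let $0<\alpha<1$ and $p\ge1$. There exists a companion SSM with state dimension $d=p$ such that, for every input sequence $(u_k)_{k\ge0}$ (the observed time series) and every $k\ge p$, $$\mathbf{C}x_k=\alpha u_{k-1}+\alpha(1-\alpha)u_{k-2}+\dots+\alpha(1-\alpha)^{p-1}u_{k-p},$$ i.e.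 the SSM reproduces the simple exponential smoothing recursion $y_k=\sum_{i=1}^p\alpha(1-\alpha)^{i-1}y_{k-i}$ when its input is the series itself. (iii) (Controllable LTI systems) Let $\mathbf{A}\in\mathbb{R}^{d\times d}$, $\mathbf{B}\in\mathbb{R}^{d\times 1}$, $\mathbf{C}\in\mathbb{R}^{1\times d}$, $\mathbf{D}\in\mathbb{R}$ define a discrete-time linear time-invariant system with $(\mathbf{A},\mathbf{B})$ controllable, i.e. the Krylov matrix $[\mathbf{B},\mathbf{A}\mathbf{B},\dots,\mathbf{A}^{d-1}\mathbf{B}]$ is invertible. Then there exist a companion matrix $\mathbf{G}\in\mathbb{R}^{d\times d}$ similar to $\mathbf{A}$ and $\mathbf{B}'\in\mathbb{R}^{d\times1}$, $\mathbf{C}'\in\mathbb{R}^{1\times d}$ such that the SSM $(\mathbf{G},\mathbf{B}',\mathbf{C}',\mathbf{D})$ has the same input–output map (from zero initial state) as $(\mathbf{A},\mathbf{B},\mathbf{C},\mathbf{D})$.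
   Context: A $d\times d$ companion matrix is a matrix of the form $$\mathbf{A}=\begin{bmatrix}0&0&\cdots&0&a_0\\1&0&\cdots&0&a_1\\0&1&\cdots&0&a_2\\\vdots&&\ddots&\vdots&\vdots\\0&0&\cdots&1&a_{d-1}\end{bmatrix},$$ i.e. ones on the first subdiagonal, an arbitrary last column $a=(a_0,\dots,a_{d-1})^T\in\mathbb{R}^d$, and zeros elsewhere. Equivalently $\mathbf{A}=\mathbf{S}+a e_d^T$ where $\mathbf{S}$ is the $d\times d$ down-shift matrix (ones on the first subdiagonal, zeros elsewhere) and $e_d$ is the $d$-th standard basis vector. With $x_0=0$, the state is $x_k=\sum_{j=0}^{k-1}\mathbf{A}^{k-1-j}\mathbf{B}u_j$. The paper states this result informally as "A companion state matrix SSM can represent ARIMA, exponential smoothing, and controllable linear time-invariant systems"; the three items give the precise meaning of "represent" used in its proof. *)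

theory Defs
  imports "Jordan_Normal_Form.Matrix" "HOL-Computational_Algebra.Polynomial"
begin

definition shift_mat :: "nat \<Rightarrow> real mat" where
  "shift_mat d = mat d d (\<lambda>(i,j). if i = Suc j then 1 else 0)"

definition companion_mat :: "nat \<Rightarrow> real vec \<Rightarrow> real mat" where
  "companion_mat d a = shift_mat d + mat d d (\<lambda>(i,j). if j = d - 1 then a $ i else 0)"

definition is_companion :: "real mat \<Rightarrow> bool" where
  "is_companion A \<longleftrightarrow> (\<exists>a. dim_vec a = dim_row A \<and> A = companion_mat (dim_row A) a)"

primrec ssm_state :: "real mat \<Rightarrow> real vec \<Rightarrow> (nat \<Rightarrow> real) \<Rightarrow> nat \<Rightarrow> real vec" where
  "ssm_state A B u 0 = 0\<^sub>v (dim_row A)"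
| "ssm_state A B u (Suc k) = A *\<^sub>v ssm_state A B u k + u k \<cdot>\<^sub>v B"

(* output y_k = C x_k + D u_k  (B a column vector, C a row vector, stored as vectors) *)
definition ssm_out :: "real mat \<Rightarrow> real vec \<Rightarrow> real vec \<Rightarrow> real \<Rightarrow> (nat \<Rightarrow> real) \<Rightarrow> nat \<Rightarrow> real" where
  "ssm_out A B C D u k = C \<bullet> ssm_state A B u k + D * u k"

(* lag operator applied i times, with zero initial conditions z_k = 0 for k < 0 *)
definition lag :: "nat \<Rightarrow> (nat \<Rightarrow> real) \<Rightarrow> nat \<Rightarrow> real" where
  "lag i z k = (if i \<le> k then z (k - i) else 0)"

definition lag_apply :: "real poly \<Rightarrow> (nat \<Rightarrow> real) \<Rightarrow> nat \<Rightarrow> real" where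
  "lag_apply P z k = (\<Sum>i\<le>degree P. coeff P i * lag i z k)"

definition arima_ar_poly :: "nat \<Rightarrow> (nat \<Rightarrow> real) \<Rightarrow> nat \<Rightarrow> real poly" where
  "arima_ar_poly p phi r = (1 - (\<Sum>i=1..p. monom (phi i) i)) * [:1, -1:] ^ r"

definition arima_ma_poly :: "nat \<Rightarrow> (nat \<Rightarrow> real) \<Rightarrow> real poly" where
  "arima_ma_poly q theta = 1 + (\<Sum>j=1..q. monom (theta j) j)"

definition arima_rel :: "nat \<Rightarrow> nat \<Rightarrow> nat \<Rightarrow> (nat \<Rightarrow> real) \<Rightarrow> (nat \<Rightarrow> real) \<Rightarrow> (nat \<Rightarrow> real) \<Rightarrow> (nat \<Rightarrow> real) \<Rightarrow> bool" where
  "arima_rel p r q phi theta u y \<longleftrightarrow>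
     (\<forall>k. lag_apply (arima_ar_poly p phi r) y k = lag_apply (arima_ma_poly q theta) u k)"

definition krylov_mat :: "nat \<Rightarrow> real mat \<Rightarrow> real vec \<Rightarrow> real mat" where
  "krylov_mat d A B = mat_of_cols d (map (\<lambda>i. (A ^\<^sub>m i) *\<^sub>v B) [0..<d])"

end

theory Submission
  imports Defs
begin

(* A companion matrix shifts the state down one slot and feeds its last entry z back through the
   last column a. Unrolling this, z_k = sum_{s=1..d} (a_(d-s) z_(k-s) + B_(d-s) u_(k-s)): a lag
   recursion with freely chosen coefficients. Reading a and B off the AR polynomial P and the MA
   polynomial Q (with D = q_0), the output z + D u satisfies P(L) y = Q(L) u, whose solution is
   unique since p_0 = 1. With a = 0 and B = e_0 the state is the window of the last d inputs, so
   every finite filter of length d, exponential smoothing included, is read off by C. For a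
   controllable pair (A, B), conjugation by the Krylov matrix turns A into a companion matrix, and
   a change of basis of the state space leaves the input-output map unchanged. *)

lemma dim_companion_mat [simp]:
  "dim_row (companion_mat d a) = d" "dim_col (companion_mat d a) = d"
  unfolding companion_mat_def shift_mat_def
  by (simp_all only: index_add_mat dim_row_mat dim_col_mat)

lemma companion_mat_carrier [simp]: "companion_mat d a \<in> carrier_mat d d"
  by (rule carrier_matI) simp_all

lemma is_companion_companion_mat: "dim_vec a = d \<Longrightarrow> is_companion (companion_mat d a)"
  unfolding is_companion_def by auto

lemma companion_mat_index:
  "i < d \<Longrightarrow> j < d \<Longrightarrow> companion_mat d a $$ (i, j) =
     (if i = Suc j then 1 else 0) + (if j = d - 1 then a $ i else 0)"
  by (simp add: companion_mat_def shift_mat_def)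

lemma companion_mat_mult_vec:
  assumes x: "x \<in> carrier_vec d" and i: "i < d"
  shows "(companion_mat d a *\<^sub>v x) $ i = (if i = 0 then 0 else x $ (i - 1)) + a $ i * x $ (d - 1)"
proof -
  have "(companion_mat d a *\<^sub>v x) $ i = (\<Sum>j<d. companion_mat d a $$ (i, j) * x $ j)"
    using x i by (simp add: scalar_prod_def row_def atLeast0LessThan)
  also have "\<dots> = (\<Sum>j<d. (if i = Suc j then x $ j else 0) + (if j = d - 1 then a $ i * x $ (d - 1) else 0))"
    by (rule sum.cong) (auto simp: companion_mat_index i distrib_right)
  also have "\<dots> = (\<Sum>j<d. if i = Suc j then x $ j else 0) + a $ i * x $ (d - 1)"
    using i by (simp add: sum.distrib)
  also have "(\<Sum>j<d. if i = Suc j then x $ j else 0) = (if i = 0 then 0 else x $ (i - 1))"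
    using i by (cases i) (simp_all add: sum.delta)
  finally show ?thesis .
qed

lemma ssm_state_carrier:
  "A \<in> carrier_mat d d \<Longrightarrow> B \<in> carrier_vec d \<Longrightarrow> ssm_state A B u k \<in> carrier_vec d"
  by (induction k) auto

lemma lag_0 [simp]: "lag 0 f k = f k"
  by (simp add: lag_def)

lemma lag_Suc_0 [simp]: "lag (Suc s) f 0 = 0"
  by (simp add: lag_def)

lemma lag_Suc_Suc [simp]: "lag (Suc s) f (Suc k) = lag s f k"
  by (simp add: lag_def)

lemma lag_add: "lag s (\<lambda>k. f k + g k) k = lag s f k + lag s g k"
  by (simp add: lag_def)

lemma lag_diff: "lag s (\<lambda>k. f k - g k) k = lag s f k - lag s g k"
  by (simp add: lag_def)

lemma lag_scale: "lag s (\<lambda>k. c * f k) k = c * lag s f k"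
  by (simp add: lag_def)

lemma lag_apply_eq_sum_atMost:
  assumes "degree P \<le> M"
  shows "lag_apply P f k = (\<Sum>s\<le>M. coeff P s * lag s f k)"
  unfolding lag_apply_def
  by (rule sum.mono_neutral_left) (use assms in \<open>auto simp: coeff_eq_0\<close>)

lemma lag_apply_diff: "lag_apply P (\<lambda>k. f k - g k) k = lag_apply P f k - lag_apply P g k"
  by (simp add: lag_apply_def lag_diff right_diff_distrib sum_subtractf)

(* A lag equation with nonzero constant coefficient determines e k from e 0, ..., e (k - 1). *)
lemma lag_apply_eq_0_imp_eq_0:
  assumes c0: "coeff P 0 \<noteq> 0" and e: "\<And>k. lag_apply P e k = 0"
  shows "e k = 0"
proof (induction k rule: less_induct)
  case (less k)
  have "0 = (\<Sum>s\<le>degree P. coeff P s * lag s e k)"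
    using e by (simp add: lag_apply_def)
  also have "\<dots> = coeff P 0 * e k + (\<Sum>s<degree P. coeff P (Suc s) * lag (Suc s) e k)"
    by (simp add: sum.atMost_shift)
  also have "(\<Sum>s<degree P. coeff P (Suc s) * lag (Suc s) e k) = 0"
    using less by (intro sum.neutral) (auto simp: lag_def)
  finally show ?case using c0 by simp
qed

lemma lag_apply_inj:
  assumes "coeff P 0 \<noteq> 0" and "\<And>k. lag_apply P f k = lag_apply P g k"
  shows "f = g"
proof
  fix k
  have "f k - g k = 0"
    using lag_apply_eq_0_imp_eq_0[of P "\<lambda>k. f k - g k"] assms by (simp add: lag_apply_diff)
  then show "f k = g k" by simp
qed

lemma companion_ssm_state:
  fixes u :: "nat \<Rightarrow> real"
  assumes B: "B \<in> carrier_vec d" and a: "dim_vec a = d" and i: "i < d"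
  defines "z \<equiv> \<lambda>k. ssm_state (companion_mat d a) B u k $ (d - 1)"
  shows "ssm_state (companion_mat d a) B u k $ i =
           (\<Sum>t\<le>i. a $ (i - t) * lag (Suc t) z k + B $ (i - t) * lag (Suc t) u k)"
  using i
proof (induction k arbitrary: i)
  case 0
  then show ?case by simp
next
  case (Suc k)
  let ?x = "ssm_state (companion_mat d a) B u k"
  have x: "?x \<in> carrier_vec d"
    using B by (rule ssm_state_carrier[OF companion_mat_carrier])
  have "ssm_state (companion_mat d a) B u (Suc k) $ i = (companion_mat d a *\<^sub>v ?x) $ i + u k * B $ i"
    using Suc.prems x B by simp
  also have "(companion_mat d a *\<^sub>v ?x) $ i = (if i = 0 then 0 else ?x $ (i - 1)) + a $ i * z k"
    unfolding z_def by (rule companion_mat_mult_vec[OF x Suc.prems])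
  finally have step: "ssm_state (companion_mat d a) B u (Suc k) $ i =
      (if i = 0 then 0 else ?x $ (i - 1)) + a $ i * z k + u k * B $ i" .
  show ?case
  proof (cases i)
    case 0
    then show ?thesis using step by simp
  next
    case (Suc j)
    then have "?x $ j = (\<Sum>t\<le>j. a $ (j - t) * lag (Suc t) z k + B $ (j - t) * lag (Suc t) u k)"
      using Suc.IH Suc.prems by simp
    then show ?thesis
      using step Suc by (simp add: sum.atMost_Suc_shift del: sum.atMost_Suc)
  qed
qed

lemma companion_ssm_last_state:
  fixes u :: "nat \<Rightarrow> real"
  assumes B: "B \<in> carrier_vec d" and a: "dim_vec a = d" and d: "0 < d"
  defines "z \<equiv> \<lambda>k. ssm_state (companion_mat d a) B u k $ (d - 1)"
  shows "z k = (\<Sum>s=1..d. a $ (d - s) * lag s z k + B $ (d - s) * lag s u k)"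
proof -
  have "z k = (\<Sum>t\<le>d - 1. a $ (d - Suc t) * lag (Suc t) z k + B $ (d - Suc t) * lag (Suc t) u k)"
    using companion_ssm_state[OF B a, of "d - 1" u k] d unfolding z_def by simp
  also have "\<dots> = (\<Sum>s=1..d. a $ (d - s) * lag s z k + B $ (d - s) * lag s u k)"
    using d by (simp add: sum.atLeast1_atMost_eq lessThan_Suc_atMost[symmetric])
  finally show ?thesis .
qed

lemma sum_atMost_split_0:
  fixes f :: "nat \<Rightarrow> 'a::comm_monoid_add"
  shows "(\<Sum>s\<le>n. f s) = f 0 + (\<Sum>s=1..n. f s)"
  by (simp only: sum.atMost_shift One_nat_def sum.atLeast1_atMost_eq)

lemma companion_ssm_out_lag_equation:
  fixes P Q :: "real poly" and u :: "nat \<Rightarrow> real"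
  assumes P0: "coeff P 0 = 1" and d: "0 < d" "degree P \<le> d" "degree Q \<le> d"
  defines "D \<equiv> coeff Q 0"
  defines "a \<equiv> vec d (\<lambda>j. - coeff P (d - j))"
    and "B \<equiv> vec d (\<lambda>j. coeff Q (d - j) - D * coeff P (d - j))"
  shows "lag_apply P (ssm_out (companion_mat d a) B (unit_vec d (d - 1)) D u) k = lag_apply Q u k"
proof -
  define z where "z = (\<lambda>k. ssm_state (companion_mat d a) B u k $ (d - 1))"
  have a: "dim_vec a = d" and B: "B \<in> carrier_vec d"
    by (simp_all add: a_def B_def)
  have y: "ssm_out (companion_mat d a) B (unit_vec d (d - 1)) D u = (\<lambda>k. z k + D * u k)"
    unfolding ssm_out_def z_def using ssm_state_carrier[OF companion_mat_carrier B] d(1) by auto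
  let ?Pz = "\<Sum>s=1..d. coeff P s * lag s z k"
  let ?Pu = "\<Sum>s=1..d. coeff P s * lag s u k"
  let ?Qu = "\<Sum>s=1..d. coeff Q s * lag s u k"
  have "z k = (\<Sum>s=1..d. a $ (d - s) * lag s z k + B $ (d - s) * lag s u k)"
    using companion_ssm_last_state[OF B a d(1), of u k] unfolding z_def .
  also have "\<dots> = (\<Sum>s=1..d. - coeff P s * lag s z k + (coeff Q s - D * coeff P s) * lag s u k)"
    by (rule sum.cong) (auto simp: a_def B_def)
  finally have z: "z k = - ?Pz + ?Qu - D * ?Pu"
    by (simp add: sum.distrib sum_negf sum_subtractf sum_distrib_left left_diff_distrib mult.assoc)
  have "lag_apply P (\<lambda>k. z k + D * u k) k =
      (\<Sum>s\<le>d. coeff P s * lag s z k) + D * (\<Sum>s\<le>d. coeff P s * lag s u k)"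
    by (simp add: lag_apply_eq_sum_atMost[OF d(2)] lag_add lag_scale
        sum.distrib sum_distrib_left algebra_simps)
  also have "\<dots> = z k + ?Pz + D * (u k + ?Pu)"
    by (simp add: sum_atMost_split_0[where n = d] P0)
  also have "\<dots> = D * u k + ?Qu"
    using z by (simp add: algebra_simps)
  also have "\<dots> = lag_apply Q u k"
    by (simp add: lag_apply_eq_sum_atMost[OF d(3)] sum_atMost_split_0[where n = d] D_def)
  finally show ?thesis
    unfolding y .
qed

lemma lag_filter_companion_realization:
  fixes P Q :: "real poly"
  assumes P0: "coeff P 0 = 1"
  shows "\<exists>d A B C D. d \<ge> 1 \<and> A \<in> carrier_mat d d \<and> is_companion A \<and>
           dim_vec B = d \<and> dim_vec C = d \<and>
           (\<forall>u y. (\<forall>k. lag_apply P y k = lag_apply Q u k) \<longrightarrow> (\<forall>k. ssm_out A B C D u k = y k))"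
proof -
  define d where "d = Suc (max (degree P) (degree Q))"
  define D where "D = coeff Q 0"
  define a where "a = vec d (\<lambda>j. - coeff P (d - j))"
  define B where "B = vec d (\<lambda>j. coeff Q (d - j) - D * coeff P (d - j))"
  define C where "C = (unit_vec d (d - 1) :: real vec)"
  have d: "0 < d" "degree P \<le> d" "degree Q \<le> d"
    by (auto simp: d_def)
  have "ssm_out (companion_mat d a) B C D u = y"
    if rel: "\<And>k. lag_apply P y k = lag_apply Q u k" for u y
  proof (rule lag_apply_inj)
    show "coeff P 0 \<noteq> 0"
      using P0 by simp
    show "lag_apply P (ssm_out (companion_mat d a) B C D u) k = lag_apply P y k" for k
      using companion_ssm_out_lag_equation[OF P0 d, of u k] rel[of k]
      unfolding a_def B_def C_def D_def by simp
  qed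
  moreover have "d \<ge> 1" "companion_mat d a \<in> carrier_mat d d" "is_companion (companion_mat d a)"
    "dim_vec B = d" "dim_vec C = d"
    by (simp_all add: d_def a_def B_def C_def is_companion_companion_mat)
  ultimately show ?thesis
    by blast
qed

lemma shift_register_ssm_state:
  assumes i: "i < d"
  shows "ssm_state (companion_mat d (0\<^sub>v d)) (unit_vec d 0) u k $ i = lag (Suc i) u k"
proof -
  have "ssm_state (companion_mat d (0\<^sub>v d)) (unit_vec d 0) u k $ i =
      (\<Sum>t\<le>i. unit_vec d 0 $ (i - t) * lag (Suc t) u k)"
    using companion_ssm_state[of "unit_vec d 0" d "0\<^sub>v d" i u k] i by simp
  also have "\<dots> = (\<Sum>t\<le>i. if t = i then lag (Suc t) u k else 0)"
    by (rule sum.cong) (use i in auto)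
  finally show ?thesis by simp
qed

lemma fir_filter_companion_realization:
  fixes w :: "nat \<Rightarrow> real"
  shows "\<exists>A B C (D::real). A \<in> carrier_mat p p \<and> is_companion A \<and>
           dim_vec B = p \<and> dim_vec C = p \<and>
           (\<forall>u k. k \<ge> p \<longrightarrow> C \<bullet> ssm_state A B u k = (\<Sum>i=1..p. w i * u (k - i)))"
proof -
  define A where "A = companion_mat p (0\<^sub>v p)"
  define B where "B = (unit_vec p 0 :: real vec)"
  define C where "C = vec p (\<lambda>i. w (Suc i))"
  have "C \<bullet> ssm_state A B u k = (\<Sum>i=1..p. w i * u (k - i))" if k: "p \<le> k" for u k
  proof -
    have "ssm_state A B u k \<in> carrier_vec p"
      unfolding A_def B_def by (rule ssm_state_carrier) simp_all
    then have "C \<bullet> ssm_state A B u k = (\<Sum>i<p. w (Suc i) * ssm_state A B u k $ i)"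
      by (simp add: C_def scalar_prod_def atLeast0LessThan carrier_vecD)
    also have "\<dots> = (\<Sum>i<p. w (Suc i) * u (k - Suc i))"
      by (rule sum.cong) (use k in \<open>auto simp: A_def B_def shift_register_ssm_state lag_def\<close>)
    also have "\<dots> = (\<Sum>i=1..p. w i * u (k - i))"
      by (simp add: sum.atLeast1_atMost_eq)
    finally show ?thesis .
  qed
  moreover have "A \<in> carrier_mat p p" "is_companion A" "dim_vec B = p" "dim_vec C = p"
    by (simp_all add: A_def B_def C_def is_companion_companion_mat)
  ultimately show ?thesis
    by blast
qed

lemma invertible_matE:
  assumes "invertible_mat K" and K: "K \<in> carrier_mat d d"
  obtains K' where "K' \<in> carrier_mat d d" "K * K' = 1\<^sub>m d" "K' * K = 1\<^sub>m d"
proof -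
  obtain K' where KK': "K * K' = 1\<^sub>m d" and K'K: "K' * K = 1\<^sub>m (dim_row K')"
    using assms unfolding invertible_mat_def inverts_mat_def by auto
  have "dim_col K' = d"
    using KK' by (metis index_mult_mat(3) index_one_mat(3))
  moreover have "dim_row K' = d"
    using K'K K by (metis index_mult_mat(3) index_one_mat(3) carrier_matD(2))
  ultimately show ?thesis
    using that KK' K'K by (auto intro: carrier_matI)
qed

lemma pow_mat_Suc_left: "A \<in> carrier_mat n n \<Longrightarrow> A ^\<^sub>m Suc k = A * A ^\<^sub>m k"
proof (induction k)
  case 0
  then show ?case by simp
next
  case (Suc k)
  have "A ^\<^sub>m Suc (Suc k) = (A * A ^\<^sub>m k) * A"
    using Suc by simp
  also have "\<dots> = A * (A ^\<^sub>m k * A)"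
    using Suc.prems by (simp add: assoc_mult_mat[of _ n n _ n _ n])
  finally show ?case by simp
qed

lemma ssm_state_change_of_basis:
  assumes A: "A \<in> carrier_mat d d" and B: "B \<in> carrier_vec d"
    and T: "T \<in> carrier_mat d d" and T': "T' \<in> carrier_mat d d" and TT': "T * T' = 1\<^sub>m d"
  shows "ssm_state (T' * A * T) (T' *\<^sub>v B) u k = T' *\<^sub>v ssm_state A B u k"
proof (induction k)
  case 0
  show ?case
    using A T T' by (intro eq_vecI) auto
next
  case (Suc k)
  let ?x = "ssm_state A B u k"
  have x: "?x \<in> carrier_vec d"
    using A B by (rule ssm_state_carrier)
  have "(T' * A * T) *\<^sub>v (T' *\<^sub>v ?x) = (T' * A) *\<^sub>v (T *\<^sub>v (T' *\<^sub>v ?x))"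
    using A T T' x by (intro assoc_mult_mat_vec) auto
  also have "T *\<^sub>v (T' *\<^sub>v ?x) = ?x"
    using T T' TT' x by (simp flip: assoc_mult_mat_vec[of T d d T' d ?x])
  also have "(T' * A) *\<^sub>v ?x = T' *\<^sub>v (A *\<^sub>v ?x)"
    using T' A x by (rule assoc_mult_mat_vec)
  finally have "(T' * A * T) *\<^sub>v (T' *\<^sub>v ?x) = T' *\<^sub>v (A *\<^sub>v ?x)" .
  then show ?case
    using Suc A B T' x by (simp add: mult_add_distrib_mat_vec[of T' d d] mult_mat_vec[of T' d d])
qed

lemma ssm_out_change_of_basis:
  assumes A: "A \<in> carrier_mat d d" and B: "B \<in> carrier_vec d" and C: "C \<in> carrier_vec d"
    and T: "T \<in> carrier_mat d d" and T': "T' \<in> carrier_mat d d" and TT': "T * T' = 1\<^sub>m d"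
  shows "ssm_out (T' * A * T) (T' *\<^sub>v B) (transpose_mat T *\<^sub>v C) D u k = ssm_out A B C D u k"
proof -
  let ?x = "ssm_state A B u k"
  have x: "?x \<in> carrier_vec d"
    using A B by (rule ssm_state_carrier)
  have "(transpose_mat T *\<^sub>v C) \<bullet> (T' *\<^sub>v ?x) = C \<bullet> (T *\<^sub>v (T' *\<^sub>v ?x))"
    using T T' C x by (simp add: transpose_vec_mult_scalar[of T d d])
  also have "T *\<^sub>v (T' *\<^sub>v ?x) = ?x"
    using T T' TT' x by (simp flip: assoc_mult_mat_vec[of T d d T' d ?x])
  finally show ?thesis
    unfolding ssm_out_def ssm_state_change_of_basis[OF A B T T' TT'] by simp
qed

lemma krylov_mat_carrier: "krylov_mat d A B \<in> carrier_mat d d"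
  unfolding krylov_mat_def by (rule carrier_matI) simp_all

lemma col_krylov_mat:
  assumes "A \<in> carrier_mat d d" "B \<in> carrier_vec d" "j < d"
  shows "col (krylov_mat d A B) j = (A ^\<^sub>m j) *\<^sub>v B"
  unfolding krylov_mat_def using assms mult_mat_vec_carrier[OF pow_carrier_mat[OF assms(1)] assms(2)]
  by (subst col_mat_of_cols) auto

(* K' sends A^j B, the j-th column of the Krylov matrix, to the unit vector e_j; so in the new
   basis A shifts e_0, ..., e_(d-2) down and maps e_(d-1) to the coordinates of A^d B. *)
lemma krylov_conjugate_eq_companion:
  assumes A: "A \<in> carrier_mat d d" and B: "B \<in> carrier_vec d"
    and K': "K' \<in> carrier_mat d d" and K'K: "K' * krylov_mat d A B = 1\<^sub>m d"
  shows "K' * A * krylov_mat d A B = companion_mat d (K' *\<^sub>v ((A ^\<^sub>m d) *\<^sub>v B))"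
    (is "?G = companion_mat d ?a")
proof -
  let ?K = "krylov_mat d A B"
  have K: "?K \<in> carrier_mat d d"
    by (rule krylov_mat_carrier)
  have unit: "K' *\<^sub>v ((A ^\<^sub>m j) *\<^sub>v B) = unit_vec d j" if "j < d" for j
  proof -
    have "col (K' * ?K) j = K' *\<^sub>v ((A ^\<^sub>m j) *\<^sub>v B)"
      using col_mult2[OF K' K that] col_krylov_mat[OF A B that] by simp
    then show ?thesis
      using K'K that by simp
  qed
  have col: "col ?G j = (if Suc j < d then unit_vec d (Suc j) else ?a)" if "j < d" for j
  proof -
    have "col ?G j = (K' * A) *\<^sub>v ((A ^\<^sub>m j) *\<^sub>v B)"
      using col_mult2[OF mult_carrier_mat[OF K' A] K that] col_krylov_mat[OF A B that] by simp
    also have "\<dots> = K' *\<^sub>v (A *\<^sub>v ((A ^\<^sub>m j) *\<^sub>v B))"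
      using K' A mult_mat_vec_carrier[OF pow_carrier_mat[OF A] B] by (rule assoc_mult_mat_vec)
    also have "A *\<^sub>v ((A ^\<^sub>m j) *\<^sub>v B) = (A ^\<^sub>m Suc j) *\<^sub>v B"
      using A B by (simp only: pow_mat_Suc_left[OF A] assoc_mult_mat_vec[OF A pow_carrier_mat[OF A] B])
    finally have "col ?G j = K' *\<^sub>v ((A ^\<^sub>m Suc j) *\<^sub>v B)" .
    moreover have "Suc j = d" if "\<not> Suc j < d"
      using \<open>j < d\<close> that by simp
    ultimately show ?thesis
      using unit[of "Suc j"] by (auto simp del: pow_mat.simps)
  qed
  show ?thesis
  proof (rule eq_matI)
    fix i j assume "i < dim_row (companion_mat d ?a)" "j < dim_col (companion_mat d ?a)"
    then have i: "i < d" and j: "j < d" by auto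
    have "?G $$ (i, j) = col ?G j $ i"
      using A K' K i j by simp
    also have "\<dots> = companion_mat d ?a $$ (i, j)"
      using col[OF j] i j by (auto simp: companion_mat_index)
    finally show "?G $$ (i, j) = companion_mat d ?a $$ (i, j)" .
  qed (use A K' K in auto)
qed

lemma controllable_companion_realization:
  assumes A: "A \<in> carrier_mat d d" and B: "dim_vec B = d" and C: "dim_vec C = d"
    and controllable: "invertible_mat (krylov_mat d A B)"
  shows "\<exists>G B' C'. G \<in> carrier_mat d d \<and> is_companion G \<and> similar_mat G A \<and>
           dim_vec B' = d \<and> dim_vec C' = d \<and>
           (\<forall>u k. ssm_out G B' C' D u k = ssm_out A B C D u k)"
proof -
  let ?K = "krylov_mat d A B"
  have B: "B \<in> carrier_vec d" and C: "C \<in> carrier_vec d" and K: "?K \<in> carrier_mat d d"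
    using B C by (auto intro: carrier_vecI krylov_mat_carrier)
  obtain K' where K': "K' \<in> carrier_mat d d" and KK': "?K * K' = 1\<^sub>m d" and K'K: "K' * ?K = 1\<^sub>m d"
    using invertible_matE[OF controllable K] .
  define G where "G = K' * A * ?K"
  have G: "G \<in> carrier_mat d d"
    unfolding G_def using A K K' by simp
  have "G = companion_mat d (K' *\<^sub>v ((A ^\<^sub>m d) *\<^sub>v B))"
    unfolding G_def by (rule krylov_conjugate_eq_companion[OF A B K' K'K])
  then have "is_companion G"
    using K' by (simp add: is_companion_companion_mat)
  moreover have "similar_mat G A"
    using A G K K' KK' K'K by (intro similar_matI[of G A K' ?K d]) (auto simp: G_def)
  moreover have "ssm_out G (K' *\<^sub>v B) (transpose_mat ?K *\<^sub>v C) D u k = ssm_out A B C D u k" for u k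
    unfolding G_def by (rule ssm_out_change_of_basis[OF A B C K K' KK'])
  ultimately show ?thesis
    using G K K' by (intro exI[of _ G] exI[of _ "K' *\<^sub>v B"] exI[of _ "transpose_mat ?K *\<^sub>v C"]) auto
qed

lemma coeff_0_arima_ar_poly: "coeff (arima_ar_poly p phi r) 0 = 1"
  by (simp add: arima_ar_poly_def coeff_mult_0 coeff_0_power coeff_sum)

theorem proposition1:
  shows
  "(\<forall>(p::nat) (q::nat) (r::nat) (phi::nat \<Rightarrow> real) (theta::nat \<Rightarrow> real).
      \<exists>d A B C D. d \<ge> 1 \<and> A \<in> carrier_mat d d \<and> is_companion A \<and>
        dim_vec B = d \<and> dim_vec C = d \<and>
        (\<forall>u y. arima_rel p r q phi theta u y \<longrightarrow> (\<forall>k. ssm_out A B C D u k = y k)))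
   \<and>
   (\<forall>(alpha::real) (p::nat). 0 < alpha \<and> alpha < 1 \<and> p \<ge> 1 \<longrightarrow>
      (\<exists>A B C (D::real). A \<in> carrier_mat p p \<and> is_companion A \<and>
        dim_vec B = p \<and> dim_vec C = p \<and>
        (\<forall>u k. k \<ge> p \<longrightarrow>
           C \<bullet> ssm_state A B u k = (\<Sum>i=1..p. alpha * (1 - alpha) ^ (i - 1) * u (k - i)))))
   \<and>
   (\<forall>(d::nat) (A::real mat) (B::real vec) (C::real vec) (D::real).
      A \<in> carrier_mat d d \<and> dim_vec B = d \<and> dim_vec C = d \<and>
      invertible_mat (krylov_mat d A B) \<longrightarrow>
      (\<exists>G B' C'. G \<in> carrier_mat d d \<and> is_companion G \<and> similar_mat G A \<and>
         dim_vec B' = d \<and> dim_vec C' = d \<and>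
         (\<forall>u k. ssm_out G B' C' D u k = ssm_out A B C D u k)))"
  apply (intro conjI allI impI)
  subgoal
    unfolding arima_rel_def by (rule lag_filter_companion_realization[OF coeff_0_arima_ar_poly])
  subgoal
    by (rule fir_filter_companion_realization)
  subgoal
    by (rule controllable_companion_realization) auto
  done

end
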